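(* Let $X$ be a schematic finite space. Then $X$ is well-connected if and only if it is top-connected and pw-connected.
   Context: Finite ringed space: finite $T_0$ space $X$ (poset, $x\le x'$ iff $x'\in U_x$, $U_x$ minimal open containing $x$) with sheaf of commutative rings $\mathcal O_X$, Noetherian stalks $\mathcal O_{X,x}=\mathcal O_X(U_x)$, restrictions $r_{xx'}$. Finite space: all $r_{xx'}$ flat. $X$ is schematic if for all $i\ge0$, $x\le x'$, $y\le y'$ the maps $H^i(U_x\cap U_y,\mathcal O_X)\otimes_{\mathcal O_{X,x}}\mathcal O_{X,x'}\to H^i(U_{x'}\cap U_y,\mathcal O_X)$ and $H^i(U_x\cap U_y,\mathcal O_X)\otimes_{\mathcal O_{X,y}}\mathcal O_{X,y'}\to H^i(U_x\cap U_{y'},\mathcal O_X)$ are isomorphisms. $X$ is top-connected if its underlying poset (topological space) is connected; connected if $\mathrm{Spec}(\mathcal O_X(X))$ is connected (the empty space is not connected); pw-connected if $\mathrm{Spec}(\mathcal O_{X,x})$ is connected (and non-empty) for every $x\in X$; well-connected if connected and pw-connected. *)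

theory Defs
  imports "HOL-Algebra.Algebra" "HOL-Analysis.Abstract_Topology"
begin

text \<open>A finite T0 space is the same as a finite poset (x \<le> x' iff x' lies in the minimal
open set U_x).  A sheaf of rings on it is the same as the data of its stalks
O_x = O(U_x) together with the restriction maps r_{x x'} for x \<le> x', functorially.\<close>

record ('a, 'r) ringed_poset =
  pts   :: "'a set"
  leq   :: "'a \<Rightarrow> 'a \<Rightarrow> bool"
  stalk :: "'a \<Rightarrow> 'r ring"
  rmap  :: "'a \<Rightarrow> 'a \<Rightarrow> 'r \<Rightarrow> 'r"

definition min_open :: "('a, 'r) ringed_poset \<Rightarrow> 'a \<Rightarrow> 'a set" where
  "min_open S x = {y \<in> pts S. leq S x y}"

definition space_topology :: "('a, 'r) ringed_poset \<Rightarrow> 'a topology" where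
  "space_topology S =
     topology (\<lambda>V. V \<subseteq> pts S \<and> (\<forall>x\<in>V. \<forall>y\<in>pts S. leq S x y \<longrightarrow> y \<in> V))"

definition finite_ringed_space :: "('a, 'r) ringed_poset \<Rightarrow> bool" where
  "finite_ringed_space S \<longleftrightarrow>
     finite (pts S) \<and>
     (\<forall>x\<in>pts S. leq S x x) \<and>
     (\<forall>x\<in>pts S. \<forall>y\<in>pts S. leq S x y \<and> leq S y x \<longrightarrow> x = y) \<and>
     (\<forall>x\<in>pts S. \<forall>y\<in>pts S. \<forall>z\<in>pts S. leq S x y \<and> leq S y z \<longrightarrow> leq S x z) \<and>
     (\<forall>x\<in>pts S. cring (stalk S x) \<and> noetherian_ring (stalk S x)) \<and>
     (\<forall>x\<in>pts S. \<forall>y\<in>pts S. leq S x y \<longrightarrow> rmap S x y \<in> ring_hom (stalk S x) (stalk S y)) \<and>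
     (\<forall>x\<in>pts S. \<forall>a\<in>carrier (stalk S x). rmap S x x a = a) \<and>
     (\<forall>x\<in>pts S. \<forall>y\<in>pts S. \<forall>z\<in>pts S. leq S x y \<and> leq S y z \<longrightarrow>
        (\<forall>a\<in>carrier (stalk S x). rmap S y z (rmap S x y a) = rmap S x z a))"

definition sections :: "('a, 'r) ringed_poset \<Rightarrow> 'a set \<Rightarrow> ('a \<Rightarrow> 'r) ring" where
  "sections S V =
    \<lparr> partial_object.carrier = {s. (\<forall>x\<in>V. s x \<in> carrier (stalk S x)) \<and>
                    (\<forall>x\<in>V. \<forall>y\<in>V. leq S x y \<longrightarrow> rmap S x y (s x) = s y) \<and>
                    (\<forall>x. x \<notin> V \<longrightarrow> s x = undefined)},
      monoid.mult = (\<lambda>s t. \<lambda>x. if x \<in> V then s x \<otimes>\<^bsub>stalk S x\<^esub> t x else undefined),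
      monoid.one = (\<lambda>x. if x \<in> V then \<one>\<^bsub>stalk S x\<^esub> else undefined),
      ring.zero = (\<lambda>x. if x \<in> V then \<zero>\<^bsub>stalk S x\<^esub> else undefined),
      ring.add = (\<lambda>s t. \<lambda>x. if x \<in> V then s x \<oplus>\<^bsub>stalk S x\<^esub> t x else undefined) \<rparr>"

definition Spec :: "('b, 'm) ring_scheme \<Rightarrow> 'b set set" where
  "Spec R = {P. primeideal P R}"

definition zariski :: "('b, 'm) ring_scheme \<Rightarrow> 'b set topology" where
  "zariski R = topology_generated_by {{P \<in> Spec R. a \<notin> P} | a. a \<in> carrier R}"

text \<open>Spec(R) is connected; the empty space is not considered connected.\<close>
definition spec_connected :: "('b, 'm) ring_scheme \<Rightarrow> bool" where
  "spec_connected R \<longleftrightarrow> Spec R \<noteq> {} \<and> connected_space (zariski R)"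

definition top_connected :: "('a, 'r) ringed_poset \<Rightarrow> bool" where
  "top_connected S \<longleftrightarrow> pts S \<noteq> {} \<and> connected_space (space_topology S)"

definition connected_rs :: "('a, 'r) ringed_poset \<Rightarrow> bool" where
  "connected_rs S \<longleftrightarrow> spec_connected (sections S (pts S))"

definition pw_connected :: "('a, 'r) ringed_poset \<Rightarrow> bool" where
  "pw_connected S \<longleftrightarrow> (\<forall>x\<in>pts S. spec_connected (stalk S x))"

definition well_connected :: "('a, 'r) ringed_poset \<Rightarrow> bool" where
  "well_connected S \<longleftrightarrow> connected_rs S \<and> pw_connected S"

text \<open>For an A-module M, a ring map f : A \<rightarrow> B, a B-module N and a map phi : M \<rightarrow> N,
the induced map M \<otimes>_A B \<rightarrow> N, m \<otimes> b \<mapsto> b phi(m).  The tensor product is realised as the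
free abelian group on carrier M \<times> carrier B modulo the subgroup generated by the
bilinearity / balancing relations.\<close>

definition delta :: "'p \<Rightarrow> 'p \<Rightarrow> int" where
  "delta q = (\<lambda>p. if p = q then 1 else 0)"

definition free_elems :: "('s, 'm) module \<Rightarrow> 't ring \<Rightarrow> ('m \<times> 't \<Rightarrow> int) set" where
  "free_elems M B = {c. finite {p. c p \<noteq> 0} \<and> {p. c p \<noteq> 0} \<subseteq> carrier M \<times> carrier B}"

definition tensor_rels ::
  "'s ring \<Rightarrow> ('s, 'm) module \<Rightarrow> ('s \<Rightarrow> 't) \<Rightarrow> 't ring \<Rightarrow> ('m \<times> 't \<Rightarrow> int) set" where
  "tensor_rels A M f B =
     {\<lambda>p. delta (m \<oplus>\<^bsub>M\<^esub> m', b) p - delta (m, b) p - delta (m', b) p | m m' b.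
        m \<in> carrier M \<and> m' \<in> carrier M \<and> b \<in> carrier B}
   \<union> {\<lambda>p. delta (m, b \<oplus>\<^bsub>B\<^esub> b') p - delta (m, b) p - delta (m, b') p | m b b'.
        m \<in> carrier M \<and> b \<in> carrier B \<and> b' \<in> carrier B}
   \<union> {\<lambda>p. delta (a \<odot>\<^bsub>M\<^esub> m, b) p - delta (m, f a \<otimes>\<^bsub>B\<^esub> b) p | a m b.
        a \<in> carrier A \<and> m \<in> carrier M \<and> b \<in> carrier B}"

inductive_set tensor_null ::
  "'s ring \<Rightarrow> ('s, 'm) module \<Rightarrow> ('s \<Rightarrow> 't) \<Rightarrow> 't ring \<Rightarrow> ('m \<times> 't \<Rightarrow> int) set"
  for A M f B where
  zero: "(\<lambda>p. 0) \<in> tensor_null A M f B"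
| step: "c \<in> tensor_null A M f B \<Longrightarrow> g \<in> tensor_rels A M f B \<Longrightarrow>
         (\<lambda>p. c p + k * g p) \<in> tensor_null A M f B"

definition tensor_lin :: "('t, 'n) module \<Rightarrow> ('m \<Rightarrow> 'n) \<Rightarrow> ('m \<times> 't \<Rightarrow> int) \<Rightarrow> 'n" where
  "tensor_lin N phi c = finsum N (\<lambda>p. [c p] \<cdot>\<^bsub>N\<^esub> (snd p \<odot>\<^bsub>N\<^esub> phi (fst p))) {p. c p \<noteq> 0}"

definition tensor_map_inj ::
  "'s ring \<Rightarrow> ('s, 'm) module \<Rightarrow> ('s \<Rightarrow> 't) \<Rightarrow> 't ring \<Rightarrow> ('t, 'n) module \<Rightarrow> ('m \<Rightarrow> 'n) \<Rightarrow> bool" where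
  "tensor_map_inj A M f B N phi \<longleftrightarrow>
     (\<forall>c\<in>free_elems M B. tensor_lin N phi c = \<zero>\<^bsub>N\<^esub> \<longrightarrow> c \<in> tensor_null A M f B)"

definition tensor_map_surj ::
  "('s, 'm) module \<Rightarrow> 't ring \<Rightarrow> ('t, 'n) module \<Rightarrow> ('m \<Rightarrow> 'n) \<Rightarrow> bool" where
  "tensor_map_surj M B N phi \<longleftrightarrow> (\<forall>n\<in>carrier N. \<exists>c\<in>free_elems M B. tensor_lin N phi c = n)"

definition base_change_iso ::
  "'s ring \<Rightarrow> ('s, 'm) module \<Rightarrow> ('s \<Rightarrow> 't) \<Rightarrow> 't ring \<Rightarrow> ('t, 'n) module \<Rightarrow> ('m \<Rightarrow> 'n) \<Rightarrow> bool" where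
  "base_change_iso A M f B N phi \<longleftrightarrow>
     tensor_map_inj A M f B N phi \<and> tensor_map_surj M B N phi"

definition ideal_module :: "'s ring \<Rightarrow> 's set \<Rightarrow> ('s, 's) module" where
  "ideal_module A I = \<lparr> partial_object.carrier = I, monoid.mult = monoid.mult A, monoid.one = monoid.one A, ring.zero = ring.zero A, ring.add = ring.add A,
                        module.smult = monoid.mult A \<rparr>"

definition self_module :: "'t ring \<Rightarrow> ('t, 't) module" where
  "self_module B = \<lparr> partial_object.carrier = carrier B, monoid.mult = monoid.mult B, monoid.one = monoid.one B, ring.zero = ring.zero B, ring.add = ring.add B,
                      module.smult = monoid.mult B \<rparr>"

definition flat_hom :: "'s ring \<Rightarrow> 't ring \<Rightarrow> ('s \<Rightarrow> 't) \<Rightarrow> bool" where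
  "flat_hom A B f \<longleftrightarrow>
     (\<forall>I. ideal I A \<longrightarrow> tensor_map_inj A (ideal_module A I) f B (self_module B) f)"

definition finite_space :: "('a, 'r) ringed_poset \<Rightarrow> bool" where
  "finite_space S \<longleftrightarrow> finite_ringed_space S \<and>
     (\<forall>x\<in>pts S. \<forall>y\<in>pts S. leq S x y \<longrightarrow> flat_hom (stalk S x) (stalk S y) (rmap S x y))"

text \<open>C^n(V, O) = product over chains x_0 < ... < x_n in V of O_{x_n}.\<close>
definition chains :: "('a, 'r) ringed_poset \<Rightarrow> 'a set \<Rightarrow> nat \<Rightarrow> 'a list set" where
  "chains S V n = {xs. length xs = Suc n \<and> set xs \<subseteq> V \<and> sorted_wrt (\<lambda>x y. leq S x y \<and> x \<noteq> y) xs}"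

definition cochains :: "('a, 'r) ringed_poset \<Rightarrow> 'a set \<Rightarrow> nat \<Rightarrow> ('a list \<Rightarrow> 'r) set" where
  "cochains S V n = {s. (\<forall>xs\<in>chains S V n. s xs \<in> carrier (stalk S (last xs))) \<and>
                        (\<forall>xs. xs \<notin> chains S V n \<longrightarrow> s xs = undefined)}"

definition cochain_zero :: "('a, 'r) ringed_poset \<Rightarrow> 'a set \<Rightarrow> nat \<Rightarrow> 'a list \<Rightarrow> 'r" where
  "cochain_zero S V n = (\<lambda>xs. if xs \<in> chains S V n then \<zero>\<^bsub>stalk S (last xs)\<^esub> else undefined)"

definition cochain_add ::
  "('a, 'r) ringed_poset \<Rightarrow> 'a set \<Rightarrow> nat \<Rightarrow> ('a list \<Rightarrow> 'r) \<Rightarrow> ('a list \<Rightarrow> 'r) \<Rightarrow> 'a list \<Rightarrow> 'r" where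
  "cochain_add S V n s t =
     (\<lambda>xs. if xs \<in> chains S V n then s xs \<oplus>\<^bsub>stalk S (last xs)\<^esub> t xs else undefined)"

definition cochain_neg ::
  "('a, 'r) ringed_poset \<Rightarrow> 'a set \<Rightarrow> nat \<Rightarrow> ('a list \<Rightarrow> 'r) \<Rightarrow> 'a list \<Rightarrow> 'r" where
  "cochain_neg S V n s =
     (\<lambda>xs. if xs \<in> chains S V n then \<ominus>\<^bsub>stalk S (last xs)\<^esub> s xs else undefined)"

text \<open>Action of O_x on cochains over V \<subseteq> U_x (through O_x \<rightarrow> O(V)).\<close>
definition cochain_smult ::
  "('a, 'r) ringed_poset \<Rightarrow> 'a set \<Rightarrow> nat \<Rightarrow> 'a \<Rightarrow> 'r \<Rightarrow> ('a list \<Rightarrow> 'r) \<Rightarrow> 'a list \<Rightarrow> 'r" where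
  "cochain_smult S V n x a s =
     (\<lambda>xs. if xs \<in> chains S V n then rmap S x (last xs) a \<otimes>\<^bsub>stalk S (last xs)\<^esub> s xs else undefined)"

definition del_nth :: "nat \<Rightarrow> 'a list \<Rightarrow> 'a list" where
  "del_nth i xs = take i xs @ drop (Suc i) xs"

definition sign_el :: "('b, 'm) ring_scheme \<Rightarrow> nat \<Rightarrow> 'b \<Rightarrow> 'b" where
  "sign_el R i a = (if even i then a else \<ominus>\<^bsub>R\<^esub> a)"

definition coboundary ::
  "('a, 'r) ringed_poset \<Rightarrow> 'a set \<Rightarrow> nat \<Rightarrow> ('a list \<Rightarrow> 'r) \<Rightarrow> 'a list \<Rightarrow> 'r" where
  "coboundary S V n s =
     (\<lambda>xs. if xs \<in> chains S V (Suc n) then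
        finsum (stalk S (last xs))
          (\<lambda>i. if i \<le> n then sign_el (stalk S (last xs)) i (s (del_nth i xs))
               else sign_el (stalk S (last xs)) (Suc n)
                      (rmap S (xs ! n) (xs ! Suc n) (s (take (Suc n) xs))))
          {0..Suc n}
      else undefined)"

definition cocycles :: "('a, 'r) ringed_poset \<Rightarrow> 'a set \<Rightarrow> nat \<Rightarrow> ('a list \<Rightarrow> 'r) set" where
  "cocycles S V n = {s \<in> cochains S V n. coboundary S V n s = cochain_zero S V (Suc n)}"

definition coboundaries :: "('a, 'r) ringed_poset \<Rightarrow> 'a set \<Rightarrow> nat \<Rightarrow> ('a list \<Rightarrow> 'r) set" where
  "coboundaries S V n =
     (case n of 0 \<Rightarrow> {cochain_zero S V 0} | Suc m \<Rightarrow> coboundary S V m ` cochains S V m)"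

definition cohom_class ::
  "('a, 'r) ringed_poset \<Rightarrow> 'a set \<Rightarrow> nat \<Rightarrow> ('a list \<Rightarrow> 'r) \<Rightarrow> ('a list \<Rightarrow> 'r) set" where
  "cohom_class S V n s =
     {t \<in> cocycles S V n. cochain_add S V n t (cochain_neg S V n s) \<in> coboundaries S V n}"

definition cohom_rep :: "('a list \<Rightarrow> 'r) set \<Rightarrow> 'a list \<Rightarrow> 'r" where
  "cohom_rep C = (SOME s. s \<in> C)"

text \<open>H^n(V, O_X) for V \<subseteq> U_x open, as a module over O_x.\<close>
definition cohom ::
  "('a, 'r) ringed_poset \<Rightarrow> 'a \<Rightarrow> 'a set \<Rightarrow> nat \<Rightarrow> ('r, ('a list \<Rightarrow> 'r) set) module" where
  "cohom S x V n =
    \<lparr> partial_object.carrier = cohom_class S V n ` cocycles S V n,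
      monoid.mult = (\<lambda>_ _. undefined), monoid.one = undefined,
      ring.zero = cohom_class S V n (cochain_zero S V n),
      ring.add = (\<lambda>C D. cohom_class S V n (cochain_add S V n (cohom_rep C) (cohom_rep D))),
      module.smult = (\<lambda>a C. cohom_class S V n (cochain_smult S V n x a (cohom_rep C))) \<rparr>"

definition cohom_restr ::
  "('a, 'r) ringed_poset \<Rightarrow> 'a set \<Rightarrow> nat \<Rightarrow> ('a list \<Rightarrow> 'r) set \<Rightarrow> ('a list \<Rightarrow> 'r) set" where
  "cohom_restr S V' n C =
     cohom_class S V' n (\<lambda>xs. if xs \<in> chains S V' n then cohom_rep C xs else undefined)"

definition schematic :: "('a, 'r) ringed_poset \<Rightarrow> bool" where
  "schematic S \<longleftrightarrow>
     (\<forall>i x x' y y'. x \<in> pts S \<and> x' \<in> pts S \<and> y \<in> pts S \<and> y' \<in> pts S \<and>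
        leq S x x' \<and> leq S y y' \<longrightarrow>
        base_change_iso (stalk S x) (cohom S x (min_open S x \<inter> min_open S y) i)
           (rmap S x x') (stalk S x') (cohom S x' (min_open S x' \<inter> min_open S y) i)
           (cohom_restr S (min_open S x' \<inter> min_open S y) i) \<and>
        base_change_iso (stalk S y) (cohom S y (min_open S x \<inter> min_open S y) i)
           (rmap S y y') (stalk S y') (cohom S y' (min_open S x \<inter> min_open S y') i)
           (cohom_restr S (min_open S x \<inter> min_open S y') i))"

end

theory Submission
  imports Defs "HOL-Analysis.Abstract_Topological_Spaces"
begin

(* Let A be the ring of global sections.  Each stalk gives a continuous map
   Spec O_x -> Spec A, and for x <= y the image of Spec O_y lies in that of Spec O_x.
   A decomposition of X into two disjoint open sets yields an idempotent of A (the indicator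
   section) which splits Spec A into two clopen parts, both nonempty because every stalk has
   a prime.  Conversely, for a clopen T of Spec A, connectedness of Spec O_x puts its whole
   image inside or outside T, so the points whose image lies in T form a clopen subset of X,
   hence are none or all of X.  Since X is finite, a section with nilpotent germs is nilpotent,
   so the images meet every nonempty open set of Spec A; therefore T is empty or everything. *)

section \<open>Prime ideals avoiding the powers of an element\<close>

lemma primeideal_nat_pow_mem:
  assumes "primeideal P R" "a \<in> carrier R" "a [^]\<^bsub>R\<^esub> (n::nat) \<in> P"
  shows "a \<in> P"
  using assms(3)
proof (induction n)
  case 0
  interpret primeideal P R by fact
  show ?case using 0 one_imp_carrier I_notcarr by simp
next
  case (Suc n)
  interpret primeideal P R by fact
  have "a [^]\<^bsub>R\<^esub> n \<otimes>\<^bsub>R\<^esub> a \<in> P" using Suc.prems by simp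
  then show ?case using Suc.IH I_prime[OF nat_pow_closed[OF assms(2)] assms(2)] by blast
qed

lemma (in cring) primeideal_if_maximal_avoiding_powers:
  assumes a: "a \<in> carrier R" and M: "ideal M R" and avoid: "\<And>n::nat. a [^] n \<notin> M"
    and max: "\<And>J. ideal J R \<Longrightarrow> M \<subseteq> J \<Longrightarrow> (\<forall>n::nat. a [^] n \<notin> J) \<Longrightarrow> J = M"
  shows "primeideal M R"
proof -
  interpret M: ideal M R by fact
  have reach: "\<exists>n::nat. \<exists>m\<in>M. \<exists>r\<in>carrier R. a [^] n = m \<oplus> r \<otimes> b"
    if b: "b \<in> carrier R" "b \<notin> M" for b
  proof -
    have J: "ideal (M <+>\<^bsub>R\<^esub> PIdl b) R" by (rule add_ideals[OF M.is_ideal cgenideal_ideal[OF b(1)]])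
    have sub: "M \<subseteq> M <+>\<^bsub>R\<^esub> PIdl b"
    proof
      fix m assume m: "m \<in> M"
      have "m = m \<oplus> \<zero> \<otimes> b" using m b M.a_subset by auto
      then show "m \<in> M <+>\<^bsub>R\<^esub> PIdl b" unfolding set_add_def' cgenideal_def using m by blast
    qed
    have "b = \<zero> \<oplus> \<one> \<otimes> b" and "\<zero> \<in> M" using b by (auto simp: M.zero_closed)
    then have "b \<in> M <+>\<^bsub>R\<^esub> PIdl b" unfolding set_add_def' cgenideal_def by blast
    then have "M <+>\<^bsub>R\<^esub> PIdl b \<noteq> M" using b(2) by auto
    then obtain n::nat where "a [^] n \<in> M <+>\<^bsub>R\<^esub> PIdl b"
      using max[OF J sub] by auto
    then show ?thesis unfolding set_add_def' cgenideal_def by blast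
  qed
  show ?thesis
  proof (rule primeidealI[OF M.is_ideal is_cring])
    show "carrier R \<noteq> M" using avoid[of 0] by auto
    fix b c assume b: "b \<in> carrier R" and c: "c \<in> carrier R" and bc: "b \<otimes> c \<in> M"
    show "b \<in> M \<or> c \<in> M"
    proof (rule ccontr)
      assume "\<not> (b \<in> M \<or> c \<in> M)"
      then obtain n1 m1 r1 n2 m2 r2 where
        m1: "m1 \<in> M" "r1 \<in> carrier R" "a [^] (n1::nat) = m1 \<oplus> r1 \<otimes> b" and
        m2: "m2 \<in> M" "r2 \<in> carrier R" "a [^] (n2::nat) = m2 \<oplus> r2 \<otimes> c"
        using reach b c by meson
      have m1c: "m1 \<in> carrier R" and m2c: "m2 \<in> carrier R" using m1 m2 M.a_subset by auto
      have "a [^] (n1 + n2) = (m1 \<oplus> r1 \<otimes> b) \<otimes> (m2 \<oplus> r2 \<otimes> c)"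
        by (simp only: nat_pow_mult[OF a, symmetric] m1(3) m2(3))
      also have "\<dots> = m1 \<otimes> (m2 \<oplus> r2 \<otimes> c) \<oplus> (r1 \<otimes> b \<otimes> m2 \<oplus> (r1 \<otimes> r2) \<otimes> (b \<otimes> c))"
        using m1c m2c b c m1 m2 by algebra
      also have "\<dots> \<in> M"
        using m1 m2 m1c m2c b c bc
        by (intro M.a_closed M.I_r_closed[OF m1(1)] M.I_l_closed[OF m2(1)] M.I_l_closed[OF bc]) auto
      finally show False using avoid by blast
    qed
  qed
qed

lemma (in cring) ex_primeideal_avoiding_non_nilpotent:
  assumes a: "a \<in> carrier R" and non_nil: "\<And>n::nat. a [^] n \<noteq> \<zero>"
  shows "\<exists>P. primeideal P R \<and> a \<notin> P"
proof -
  define F where "F = {I. ideal I R \<and> (\<forall>n::nat. a [^] n \<notin> I)}"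
  have "\<exists>M\<in>F. \<forall>J\<in>F. M \<subseteq> J \<longrightarrow> J = M"
  proof (rule subset_Zorn_nonempty)
    show "F \<noteq> {}" unfolding F_def using non_nil zeroideal by auto
    fix C assume "C \<noteq> {}" "subset.chain F C"
    then have "ideal (\<Union>C) R" using chain_Union_is_ideal[of C]
      unfolding F_def pred_on.chain_def by auto
    then show "\<Union>C \<in> F" using \<open>subset.chain F C\<close> unfolding F_def pred_on.chain_def by auto
  qed
  then obtain M where "M \<in> F" and max: "\<And>J. J \<in> F \<Longrightarrow> M \<subseteq> J \<Longrightarrow> J = M"
    by blast
  then have M: "ideal M R" and avoid: "\<And>n::nat. a [^] n \<notin> M"
    unfolding F_def by auto
  have "primeideal M R"
    using max unfolding F_def by (intro primeideal_if_maximal_avoiding_powers[OF a M avoid]) blast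
  then show ?thesis using avoid[of 1] a by auto
qed

section \<open>Spectra and the Zariski topology\<close>

lemma Spec_memD:
  assumes "P \<in> Spec R"
  shows Spec_zero_mem: "\<zero>\<^bsub>R\<^esub> \<in> P" and Spec_one_not_mem: "\<one>\<^bsub>R\<^esub> \<notin> P"
proof -
  interpret primeideal P R using assms by (simp add: Spec_def)
  show "\<zero>\<^bsub>R\<^esub> \<in> P" by (simp add: additive_subgroup.zero_closed is_additive_subgroup)
  show "\<one>\<^bsub>R\<^esub> \<notin> P" using I_notcarr one_imp_carrier by blast
qed

definition Spec_map :: "('a, 'm) ring_scheme \<Rightarrow> ('a \<Rightarrow> 'b) \<Rightarrow> 'b set \<Rightarrow> 'a set" where
  "Spec_map A h Q = {a \<in> carrier A. h a \<in> Q}"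

lemma Spec_map_in_Spec:
  assumes A: "cring A" and h: "h \<in> ring_hom A B" and Q: "Q \<in> Spec B"
  shows "Spec_map A h Q \<in> Spec A"
proof -
  interpret A: cring A by fact
  interpret Q: primeideal Q B using Q by (simp add: Spec_def)
  interpret h: ring_hom_cring A B h using A h by (simp add: ring_hom_cring.intro ring_hom_cring_axioms.intro Q.is_cring)
  have ideal: "ideal (Spec_map A h Q) A"
  proof (rule idealI[OF A.ring_axioms])
    show "subgroup (Spec_map A h Q) (add_monoid A)"
      by (rule subgroup.intro) (auto simp: Spec_map_def Q.a_closed Q.a_inv_closed a_inv_def[symmetric])
  qed (auto simp: Spec_map_def Q.I_l_closed Q.I_r_closed)
  have "\<one>\<^bsub>A\<^esub> \<notin> Spec_map A h Q"
    using Spec_one_not_mem[OF Q] by (simp add: Spec_map_def)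
  then have proper: "carrier A \<noteq> Spec_map A h Q" using A.one_closed by blast
  have prime: "a \<in> Spec_map A h Q \<or> b \<in> Spec_map A h Q"
    if "a \<in> carrier A" "b \<in> carrier A" "a \<otimes>\<^bsub>A\<^esub> b \<in> Spec_map A h Q" for a b
    using that Q.I_prime[of "h a" "h b"] by (auto simp: Spec_map_def)
  show ?thesis
    unfolding Spec_def mem_Collect_eq by (rule primeidealI[OF ideal A proper prime])
qed

lemma Spec_map_comp:
  assumes "h \<in> carrier A \<rightarrow> carrier B" and "\<And>a. a \<in> carrier A \<Longrightarrow> k a = g (h a)"
  shows "Spec_map A k Q = Spec_map A h (Spec_map B g Q)"
  using assms by (auto simp: Spec_map_def)

lemma topspace_zariski: "topspace (zariski R) = Spec R"
proof
  show "topspace (zariski R) \<subseteq> Spec R" unfolding zariski_def by auto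
  show "Spec R \<subseteq> topspace (zariski R)"
  proof
    fix P assume P: "P \<in> Spec R"
    then have "P \<in> {Q \<in> Spec R. \<one>\<^bsub>R\<^esub> \<notin> Q}" using Spec_one_not_mem by blast
    moreover have "\<one>\<^bsub>R\<^esub> \<in> carrier R"
      using P unfolding Spec_def by (blast intro: primeideal.axioms(2) cring.axioms(1) ring.ring_simprules(6))
    ultimately show "P \<in> topspace (zariski R)" unfolding zariski_def by auto
  qed
qed

lemma openin_zariski_basic: "a \<in> carrier R \<Longrightarrow> openin (zariski R) {P \<in> Spec R. a \<notin> P}"
  unfolding zariski_def by (rule topology_generated_by_Basis) blast

lemma zariski_basic_nbhd:
  assumes "openin (zariski R) G" "p \<in> G"
  shows "\<exists>a\<in>carrier R. p \<in> {P \<in> Spec R. a \<notin> P} \<and> {P \<in> Spec R. a \<notin> P} \<subseteq> G"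
proof -
  have "generate_topology_on {{P \<in> Spec R. a \<notin> P} | a. a \<in> carrier R} G"
    using assms(1) unfolding zariski_def by (rule openin_topology_generated_by)
  then show ?thesis using assms(2)
  proof (induction arbitrary: p)
    case (Int U W)
    then obtain a b where a: "a \<in> carrier R" "p \<in> {P \<in> Spec R. a \<notin> P}" "{P \<in> Spec R. a \<notin> P} \<subseteq> U"
      and b: "b \<in> carrier R" "p \<in> {P \<in> Spec R. b \<notin> P}" "{P \<in> Spec R. b \<notin> P} \<subseteq> W"
      by (meson IntD1 IntD2)
    have "a \<otimes>\<^bsub>R\<^esub> b \<notin> P \<longleftrightarrow> a \<notin> P \<and> b \<notin> P" if "P \<in> Spec R" for P
    proof -
      interpret primeideal P R using that by (simp add: Spec_def)
      show ?thesis using I_prime[OF a(1) b(1)] I_r_closed[OF _ b(1)] I_l_closed[OF _ a(1)] by blast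
    qed
    then have D_mult: "{P \<in> Spec R. a \<otimes>\<^bsub>R\<^esub> b \<notin> P} = {P \<in> Spec R. a \<notin> P} \<inter> {P \<in> Spec R. b \<notin> P}"
      by blast
    interpret cring R using a(2) unfolding Spec_def by (blast intro: primeideal.axioms(2))
    show ?case
      by (rule bexI[of _ "a \<otimes>\<^bsub>R\<^esub> b"]) (use a b D_mult in auto)
  qed blast+
qed

lemma continuous_map_Spec_map:
  assumes A: "cring A" and h: "h \<in> ring_hom A B"
  shows "continuous_map (zariski B) (zariski A) (Spec_map A h)"
  unfolding continuous_map_def topspace_zariski
proof (intro conjI allI impI)
  show "Spec_map A h \<in> Spec B \<rightarrow> Spec A" using Spec_map_in_Spec[OF A h] by blast
  fix U assume "openin (zariski A) U"
  show "openin (zariski B) {Q \<in> Spec B. Spec_map A h Q \<in> U}"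
  proof (rule openin_subopen[THEN iffD2], intro ballI)
    fix Q assume Q: "Q \<in> {Q \<in> Spec B. Spec_map A h Q \<in> U}"
    then obtain a where a: "a \<in> carrier A" "a \<notin> Spec_map A h Q"
      and aU: "{P \<in> Spec A. a \<notin> P} \<subseteq> U"
      using zariski_basic_nbhd[OF \<open>openin (zariski A) U\<close>] by blast
    have "h a \<in> carrier B" using h a(1) by (simp add: ring_hom_closed)
    moreover have "{Q \<in> Spec B. h a \<notin> Q} \<subseteq> {Q \<in> Spec B. Spec_map A h Q \<in> U}"
      using aU a(1) Spec_map_in_Spec[OF A h] by (auto simp: Spec_map_def)
    ultimately show "\<exists>T. openin (zariski B) T \<and> Q \<in> T \<and> T \<subseteq> {Q \<in> Spec B. Spec_map A h Q \<in> U}"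
      using Q a openin_zariski_basic by (fastforce simp: Spec_map_def)
  qed
qed

lemma closedin_zariski_idempotent:
  fixes R (structure)
  assumes R: "cring R" and e: "e \<in> carrier R" "e \<otimes> e = e"
  shows "closedin (zariski R) {P \<in> Spec R. e \<notin> P}"
proof -
  interpret cring R by fact
  have "e \<in> P \<longleftrightarrow> \<one> \<ominus> e \<notin> P" if "P \<in> Spec R" for P
  proof -
    interpret primeideal P R using that by (simp add: Spec_def)
    have "e \<oplus> (\<one> \<ominus> e) = \<one>" and "e \<otimes> (\<one> \<ominus> e) = \<zero>"
      using e by algebra+
    then show ?thesis
      using I_notcarr one_imp_carrier I_prime[OF e(1), of "\<one> \<ominus> e"] e(1) a_closed zero_closed
      by (metis minus_closed one_closed)
  qed
  then have "Spec R - {P \<in> Spec R. e \<notin> P} = {P \<in> Spec R. \<one> \<ominus> e \<notin> P}" by blast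
  then show ?thesis
    unfolding closedin_def topspace_zariski using openin_zariski_basic[of "\<one> \<ominus> e" R] e by auto
qed

section \<open>The ring of sections and the spectra of the stalks\<close>

lemma finite_ringed_spaceD:
  assumes "finite_ringed_space S"
  shows finite_ringed_space_finite: "finite (pts S)"
    and finite_ringed_space_cring: "x \<in> pts S \<Longrightarrow> cring (stalk S x)"
    and finite_ringed_space_ring_hom:
      "\<lbrakk>x \<in> pts S; y \<in> pts S; leq S x y\<rbrakk> \<Longrightarrow> rmap S x y \<in> ring_hom (stalk S x) (stalk S y)"
  using assms unfolding finite_ringed_space_def by blast+

lemma carrier_sections:
  "carrier (sections S V) = {s. (\<forall>x\<in>V. s x \<in> carrier (stalk S x)) \<and>
     (\<forall>x\<in>V. \<forall>y\<in>V. leq S x y \<longrightarrow> rmap S x y (s x) = s y) \<and> (\<forall>x. x \<notin> V \<longrightarrow> s x = undefined)}"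
  by (simp add: sections_def)

lemma sections_add: "s \<oplus>\<^bsub>sections S V\<^esub> t = (\<lambda>x. if x \<in> V then s x \<oplus>\<^bsub>stalk S x\<^esub> t x else undefined)"
  by (simp add: sections_def)

lemma sections_mult: "s \<otimes>\<^bsub>sections S V\<^esub> t = (\<lambda>x. if x \<in> V then s x \<otimes>\<^bsub>stalk S x\<^esub> t x else undefined)"
  by (simp add: sections_def)

lemma sections_one: "\<one>\<^bsub>sections S V\<^esub> = (\<lambda>x. if x \<in> V then \<one>\<^bsub>stalk S x\<^esub> else undefined)"
  by (simp add: sections_def)

lemma sections_zero: "\<zero>\<^bsub>sections S V\<^esub> = (\<lambda>x. if x \<in> V then \<zero>\<^bsub>stalk S x\<^esub> else undefined)"
  by (simp add: sections_def)

lemmas sections_simps = carrier_sections sections_add sections_mult sections_one sections_zero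

lemma sections_cring:
  assumes fr: "finite_ringed_space S" and V: "V \<subseteq> pts S"
  shows "cring (sections S V)"
proof -
  have cr: "\<And>x. x \<in> V \<Longrightarrow> cring (stalk S x)"
    using finite_ringed_space_cring[OF fr] V by blast
  have hom: "rmap S x y \<in> ring_hom (stalk S x) (stalk S y)"
    if "x \<in> V" "y \<in> V" "leq S x y" for x y
    using that V finite_ringed_space_ring_hom[OF fr] by blast
  have rh: "ring_hom_cring (stalk S x) (stalk S y) (rmap S x y)"
    if "x \<in> V" "y \<in> V" "leq S x y" for x y
    using that cr hom by (simp add: ring_hom_cring.intro ring_hom_cring_axioms.intro)
  note restr = ring_hom_add[OF hom] ring_hom_mult[OF hom] ring_hom_one[OF hom]
    ring_hom_cring.hom_zero[OF rh] ring_hom_cring.hom_a_inv[OF rh]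
  note stalk_laws = cring.cring_simprules[OF cr] monoid.r_one[OF ring.is_monoid[OF cring.axioms(1)[OF cr]]]
  show ?thesis
  proof (intro cringI abelian_groupI comm_monoidI)
    fix s assume s: "s \<in> carrier (sections S V)"
    show "\<exists>t\<in>carrier (sections S V). t \<oplus>\<^bsub>sections S V\<^esub> s = \<zero>\<^bsub>sections S V\<^esub>"
      using s by (intro bexI[of _ "\<lambda>x. if x \<in> V then \<ominus>\<^bsub>stalk S x\<^esub> s x else undefined"])
        (auto simp: sections_simps stalk_laws restr intro!: ext)
  qed (auto simp: sections_simps stalk_laws restr intro!: ext)
qed

abbreviation global_sections :: "('a, 'r) ringed_poset \<Rightarrow> ('a \<Rightarrow> 'r) ring" where
  "global_sections S \<equiv> sections S (pts S)"

lemma ring_hom_eval_sections: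
  assumes "x \<in> V"
  shows "(\<lambda>s. s x) \<in> ring_hom (sections S V) (stalk S x)"
  using assms by (intro ring_hom_memI) (auto simp: sections_simps)

lemma sections_nat_pow_eval:
  assumes fr: "finite_ringed_space S" and V: "V \<subseteq> pts S" and "x \<in> V" and s: "s \<in> carrier (sections S V)"
  shows "(s [^]\<^bsub>sections S V\<^esub> (n::nat)) x = s x [^]\<^bsub>stalk S x\<^esub> n"
proof -
  interpret ring_hom_ring "sections S V" "stalk S x" "\<lambda>s. s x"
    using assms sections_cring[OF fr V] finite_ringed_space_cring[OF fr] ring_hom_eval_sections
    by (intro ring_hom_ringI2 cring.axioms(1)) auto
  show ?thesis using s by (rule hom_nat_pow)
qed

text \<open>Here the finiteness of the space enters: a common exponent is the sum of those of the germs.\<close>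
lemma sections_nilpotentI:
  assumes fr: "finite_ringed_space S" and s: "s \<in> carrier (global_sections S)"
    and nil: "\<And>x. x \<in> pts S \<Longrightarrow> \<exists>n::nat. s x [^]\<^bsub>stalk S x\<^esub> n = \<zero>\<^bsub>stalk S x\<^esub>"
  shows "\<exists>n::nat. s [^]\<^bsub>global_sections S\<^esub> n = \<zero>\<^bsub>global_sections S\<^esub>"
proof -
  obtain m where m: "\<And>x. x \<in> pts S \<Longrightarrow> s x [^]\<^bsub>stalk S x\<^esub> (m x :: nat) = \<zero>\<^bsub>stalk S x\<^esub>"
    using nil by metis
  define N where "N = (\<Sum>x\<in>pts S. m x)"
  have "s x [^]\<^bsub>stalk S x\<^esub> N = \<zero>\<^bsub>stalk S x\<^esub>" if x: "x \<in> pts S" for x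
  proof -
    interpret cring "stalk S x" using finite_ringed_space_cring[OF fr x] .
    have sx: "s x \<in> carrier (stalk S x)" using s x by (simp add: sections_simps)
    have "m x \<le> N" unfolding N_def by (rule member_le_sum[OF x _ finite_ringed_space_finite[OF fr]]) simp
    then obtain k where "N = m x + k" using le_Suc_ex by blast
    then show ?thesis using m[OF x] sx by (simp add: nat_pow_mult[symmetric])
  qed
  moreover have "s [^]\<^bsub>global_sections S\<^esub> N \<in> carrier (global_sections S)"
    using s cring.axioms(1)[OF sections_cring[OF fr order.refl]] by (simp add: monoid.nat_pow_closed ring.is_monoid)
  ultimately have "s [^]\<^bsub>global_sections S\<^esub> N = \<zero>\<^bsub>global_sections S\<^esub>"
    using sections_nat_pow_eval[OF fr order.refl _ s] by (auto simp: sections_simps intro!: ext)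
  then show ?thesis ..
qed

definition stalk_image :: "('a, 'r) ringed_poset \<Rightarrow> 'a \<Rightarrow> ('a \<Rightarrow> 'r) set set" where
  "stalk_image S x = Spec_map (global_sections S) (\<lambda>s. s x) ` Spec (stalk S x)"

lemma stalk_image_subset_Spec:
  assumes fr: "finite_ringed_space S" and x: "x \<in> pts S"
  shows "stalk_image S x \<subseteq> Spec (global_sections S)"
  unfolding stalk_image_def
  using Spec_map_in_Spec[OF sections_cring[OF fr order.refl] ring_hom_eval_sections[OF x]] by blast

lemma connectedin_stalk_image:
  assumes fr: "finite_ringed_space S" and x: "x \<in> pts S" and conn: "connected_space (zariski (stalk S x))"
  shows "connectedin (zariski (global_sections S)) (stalk_image S x)"
  unfolding stalk_image_def topspace_zariski[symmetric]
  by (rule connectedin_continuous_map_image[OF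
        continuous_map_Spec_map[OF sections_cring[OF fr order.refl] ring_hom_eval_sections[OF x]]])
     (simp add: conn connectedin_topspace)

lemma stalk_image_antimono:
  assumes fr: "finite_ringed_space S" and x: "x \<in> pts S" and y: "y \<in> pts S" and xy: "leq S x y"
  shows "stalk_image S y \<subseteq> stalk_image S x"
proof
  fix P assume "P \<in> stalk_image S y"
  then obtain Q where Q: "Q \<in> Spec (stalk S y)" and P: "P = Spec_map (global_sections S) (\<lambda>s. s y) Q"
    unfolding stalk_image_def by blast
  have "Spec_map (stalk S x) (rmap S x y) Q \<in> Spec (stalk S x)"
    by (rule Spec_map_in_Spec[OF finite_ringed_space_cring[OF fr x]
          finite_ringed_space_ring_hom[OF fr x y xy] Q])
  moreover have "P = Spec_map (global_sections S) (\<lambda>s. s x) (Spec_map (stalk S x) (rmap S x y) Q)"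
    unfolding P using x y xy by (intro Spec_map_comp) (auto simp: sections_simps)
  ultimately show "P \<in> stalk_image S x" unfolding stalk_image_def by blast
qed

text \<open>A nonempty basic open set D(a) forces a to be non-nilpotent, hence some germ of a
  to be non-nilpotent, and a prime of that stalk avoiding it maps into D(a).\<close>
lemma stalk_image_meets_open:
  assumes fr: "finite_ringed_space S" and G: "openin (zariski (global_sections S)) G" "G \<noteq> {}"
  shows "\<exists>x\<in>pts S. stalk_image S x \<inter> G \<noteq> {}"
proof -
  let ?A = "global_sections S"
  interpret A: cring ?A using sections_cring[OF fr order.refl] .
  obtain p a where a: "a \<in> carrier ?A" and p: "p \<in> Spec ?A" "a \<notin> p"
    and aG: "{P \<in> Spec ?A. a \<notin> P} \<subseteq> G"
    using zariski_basic_nbhd[OF G(1)] G(2) by blast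
  have "a [^]\<^bsub>?A\<^esub> n \<noteq> \<zero>\<^bsub>?A\<^esub>" for n :: nat
    using primeideal_nat_pow_mem[of p ?A a n] Spec_zero_mem[OF p(1)] p a by (auto simp: Spec_def)
  then obtain x where x: "x \<in> pts S" and non_nil: "\<And>n::nat. a x [^]\<^bsub>stalk S x\<^esub> n \<noteq> \<zero>\<^bsub>stalk S x\<^esub>"
    using sections_nilpotentI[OF fr a] by blast
  have ax: "a x \<in> carrier (stalk S x)" using a x by (simp add: sections_simps)
  obtain Q where Q: "primeideal Q (stalk S x)" "a x \<notin> Q"
    using cring.ex_primeideal_avoiding_non_nilpotent[OF finite_ringed_space_cring[OF fr x] ax non_nil] by blast
  let ?P = "Spec_map ?A (\<lambda>s. s x) Q"
  have "?P \<in> stalk_image S x" using Q unfolding stalk_image_def Spec_def by blast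
  moreover have "?P \<in> G"
    using aG Q stalk_image_subset_Spec[OF fr x] calculation by (auto simp: Spec_map_def)
  ultimately show ?thesis using x by blast
qed

section \<open>Connectedness\<close>

lemma openin_space_topology:
  "openin (space_topology S) V \<longleftrightarrow> V \<subseteq> pts S \<and> (\<forall>x\<in>V. \<forall>y\<in>pts S. leq S x y \<longrightarrow> y \<in> V)"
proof -
  have "istopology (\<lambda>V. V \<subseteq> pts S \<and> (\<forall>x\<in>V. \<forall>y\<in>pts S. leq S x y \<longrightarrow> y \<in> V))"
    unfolding istopology_def by blast
  then show ?thesis unfolding space_topology_def by simp
qed

lemma topspace_space_topology: "topspace (space_topology S) = pts S"
  by (metis openin_space_topology openin_subset openin_topspace subset_antisym subset_refl)

lemma clopen_space_topology_iff:
  "openin (space_topology S) E \<and> closedin (space_topology S) E \<longleftrightarrow>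
     E \<subseteq> pts S \<and> (\<forall>x\<in>pts S. \<forall>y\<in>pts S. leq S x y \<longrightarrow> (x \<in> E \<longleftrightarrow> y \<in> E))"
  unfolding closedin_def openin_space_topology topspace_space_topology by blast

definition indicator_section :: "('a, 'r) ringed_poset \<Rightarrow> 'a set \<Rightarrow> 'a \<Rightarrow> 'r" where
  "indicator_section S E =
     (\<lambda>x. if x \<in> pts S then if x \<in> E then \<one>\<^bsub>stalk S x\<^esub> else \<zero>\<^bsub>stalk S x\<^esub> else undefined)"

lemma indicator_section_idempotent:
  assumes fr: "finite_ringed_space S"
    and E: "\<And>x y. x \<in> pts S \<Longrightarrow> y \<in> pts S \<Longrightarrow> leq S x y \<Longrightarrow> x \<in> E \<longleftrightarrow> y \<in> E"
  shows "indicator_section S E \<in> carrier (global_sections S)"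
    and "indicator_section S E \<otimes>\<^bsub>global_sections S\<^esub> indicator_section S E = indicator_section S E"
proof -
  have cr: "\<And>x. x \<in> pts S \<Longrightarrow> cring (stalk S x)" by (rule finite_ringed_space_cring[OF fr])
  have hom: "\<And>x y. \<lbrakk>x \<in> pts S; y \<in> pts S; leq S x y\<rbrakk> \<Longrightarrow> rmap S x y \<in> ring_hom (stalk S x) (stalk S y)"
    by (rule finite_ringed_space_ring_hom[OF fr])
  show "indicator_section S E \<in> carrier (global_sections S)"
    using E ring_hom_one[OF hom] ring_hom_zero[OF hom cring.axioms(1)[OF cr] cring.axioms(1)[OF cr]]
    by (auto simp: indicator_section_def sections_simps cring.cring_simprules[OF cr])
  show "indicator_section S E \<otimes>\<^bsub>global_sections S\<^esub> indicator_section S E = indicator_section S E"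
    by (auto simp: indicator_section_def sections_simps cring.cring_simprules[OF cr] intro!: ext)
qed

lemma top_connected_if_connected_rs:
  assumes fr: "finite_ringed_space S" and conn: "connected_rs S" and pw: "pw_connected S"
  shows "top_connected S"
proof -
  let ?A = "global_sections S"
  have spec_ne: "Spec (stalk S x) \<noteq> {}" if "x \<in> pts S" for x
    using pw that unfolding pw_connected_def spec_connected_def by blast
  obtain p where p: "p \<in> Spec ?A" using conn unfolding connected_rs_def spec_connected_def by blast
  have "\<one>\<^bsub>?A\<^esub> \<noteq> \<zero>\<^bsub>?A\<^esub>" using Spec_memD[OF p] by metis
  then have "pts S \<noteq> {}" by (auto simp: sections_simps)
  moreover have "connected_space (space_topology S)"
    unfolding connected_space_clopen_in topspace_space_topology
  proof (intro allI impI)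
    fix E assume "openin (space_topology S) E \<and> closedin (space_topology S) E"
    then have E: "E \<subseteq> pts S" and E_iff: "\<And>x y. \<lbrakk>x \<in> pts S; y \<in> pts S; leq S x y\<rbrakk> \<Longrightarrow> x \<in> E \<longleftrightarrow> y \<in> E"
      unfolding clopen_space_topology_iff by blast+
    let ?e = "indicator_section S E"
    let ?D = "{P \<in> Spec ?A. ?e \<notin> P}"
    note e = indicator_section_idempotent[OF fr E_iff]
    have "openin (zariski ?A) ?D" "closedin (zariski ?A) ?D"
      using openin_zariski_basic[OF e(1)] closedin_zariski_idempotent[OF sections_cring[OF fr order.refl] e]
      by auto
    then have D: "?D = {} \<or> ?D = Spec ?A"
      using conn unfolding connected_rs_def spec_connected_def connected_space_clopen_in topspace_zariski
      by blast
    have germ: "Spec_map ?A (\<lambda>s. s x) Q \<in> Spec ?A \<and> (?e \<notin> Spec_map ?A (\<lambda>s. s x) Q \<longleftrightarrow> x \<in> E)"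
      if x: "x \<in> pts S" and Q: "Q \<in> Spec (stalk S x)" for x Q
      using Spec_memD[OF Q] e(1) stalk_image_subset_Spec[OF fr x] Q
      by (auto simp: stalk_image_def Spec_map_def indicator_section_def x)
    from D show "E = {} \<or> E = pts S"
    proof
      assume "?D = {}"
      then have "x \<notin> E" if "x \<in> pts S" for x using germ[OF that] spec_ne[OF that] by blast
      then show ?thesis using E by blast
    next
      assume "?D = Spec ?A"
      then have "x \<in> E" if "x \<in> pts S" for x using germ[OF that] spec_ne[OF that] by blast
      then show ?thesis using E by blast
    qed
  qed
  ultimately show ?thesis unfolding top_connected_def ..
qed

lemma connected_rs_if_top_connected:
  assumes fr: "finite_ringed_space S" and conn: "top_connected S" and pw: "pw_connected S"
  shows "connected_rs S"
proof -
  let ?A = "global_sections S"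
  have stalk_conn: "connected_space (zariski (stalk S x))" and spec_ne: "Spec (stalk S x) \<noteq> {}"
    if "x \<in> pts S" for x
    using pw that unfolding pw_connected_def spec_connected_def by blast+
  have image_ne: "stalk_image S x \<noteq> {}" if "x \<in> pts S" for x
    using spec_ne[OF that] unfolding stalk_image_def by blast
  obtain x0 where "x0 \<in> pts S" using conn unfolding top_connected_def by blast
  then have "Spec ?A \<noteq> {}" using image_ne stalk_image_subset_Spec[OF fr] by blast
  moreover have "connected_space (zariski ?A)"
    unfolding connected_space_clopen_in topspace_zariski
  proof (intro allI impI)
    fix T assume T: "openin (zariski ?A) T \<and> closedin (zariski ?A) T"
    have side: "stalk_image S x \<subseteq> T \<or> stalk_image S x \<inter> T = {}" if "x \<in> pts S" for x
      using connectedin_clopen_cases[OF connectedin_stalk_image[OF fr that stalk_conn[OF that]]] T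
      by (auto simp: disjnt_def)
    define E where "E = {x \<in> pts S. stalk_image S x \<subseteq> T}"
    have "x \<in> E \<longleftrightarrow> y \<in> E" if "x \<in> pts S" "y \<in> pts S" "leq S x y" for x y
      using stalk_image_antimono[OF fr that] side that image_ne unfolding E_def by blast
    then have "openin (space_topology S) E \<and> closedin (space_topology S) E"
      unfolding clopen_space_topology_iff E_def by blast
    then have "E = {} \<or> E = pts S"
      using conn unfolding top_connected_def connected_space_clopen_in topspace_space_topology by blast
    then show "T = {} \<or> T = Spec ?A"
    proof
      assume "E = {}"
      then have "\<forall>x\<in>pts S. stalk_image S x \<inter> T = {}" using side unfolding E_def by blast
      then show ?thesis using stalk_image_meets_open[OF fr] T by blast
    next
      assume "E = pts S"
      then have "\<forall>x\<in>pts S. stalk_image S x \<inter> (Spec ?A - T) = {}" unfolding E_def by blast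
      moreover have "openin (zariski ?A) (Spec ?A - T)"
        using T unfolding closedin_def topspace_zariski by blast
      ultimately show ?thesis using stalk_image_meets_open[OF fr] T closedin_subset[of "zariski ?A" T]
        unfolding topspace_zariski by blast
    qed
  qed
  ultimately show ?thesis unfolding connected_rs_def spec_connected_def by blast
qed

theorem proposition2p2:
  fixes S :: "('a, 'r) ringed_poset"
  assumes "finite_space S" and "schematic S"
  shows "well_connected S \<longleftrightarrow> top_connected S \<and> pw_connected S"
proof -
  have "finite_ringed_space S" using assms(1) unfolding finite_space_def by simp
  then show ?thesis
    unfolding well_connected_def
    using top_connected_if_connected_rs connected_rs_if_top_connected by blast
qed

end
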